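(* Let $G=(V,E)$ be a graph and $k$ a nonnegative integer. Then $G$ has a dominating set of size $k$ if and only if it is possible to turn $G$ into a constellation (with vertex set $V$) by deleting $|E|-|V|+k$ edges.
   Context: All graphs are finite, simple and undirected. A dominating set of $G$ is a set $D\subseteq V$ such that every vertex of $V\setminus D$ is adjacent to some vertex of $D$. A star is a complete bipartite graph $K_{1,n}$ for some $n\ge 0$ (so a single vertex is a star). A constellation is a forest in which every connected component is a star. *)

theory Defs
  imports Main
begin

definition simple_graph :: "'a set \<Rightarrow> 'a set set \<Rightarrow> bool" where
  "simple_graph V E \<longleftrightarrow> finite V \<and> (\<forall>e\<in>E. \<exists>u v. u \<in> V \<and> v \<in> V \<and> u \<noteq> v \<and> e = {u, v})"

definition dominating_set :: "'a set \<Rightarrow> 'a set set \<Rightarrow> 'a set \<Rightarrow> bool" where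
  "dominating_set V E D \<longleftrightarrow> D \<subseteq> V \<and> (\<forall>v \<in> V - D. \<exists>d \<in> D. {v, d} \<in> E)"

definition adj_rel :: "'a set set \<Rightarrow> ('a \<times> 'a) set" where
  "adj_rel E = {(x, y). {x, y} \<in> E}"

definition component :: "'a set \<Rightarrow> 'a set set \<Rightarrow> 'a \<Rightarrow> 'a set" where
  "component V E v = {u \<in> V. (v, u) \<in> (adj_rel E)\<^sup>*}"

definition components :: "'a set \<Rightarrow> 'a set set \<Rightarrow> 'a set set" where
  "components V E = component V E ` V"

definition induced_edges :: "'a set set \<Rightarrow> 'a set \<Rightarrow> 'a set set" where
  "induced_edges E C = {e \<in> E. e \<subseteq> C}"

definition is_star :: "'a set \<Rightarrow> 'a set set \<Rightarrow> bool" where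
  "is_star C F \<longleftrightarrow> (\<exists>c \<in> C. F = {{c, v} | v. v \<in> C \<and> v \<noteq> c})"

text \<open>Forest: no cycles, expressed as: every component C spans exactly |C| - 1 edges
  (a connected graph is a tree iff it has one edge fewer than vertices).\<close>
definition forest :: "'a set \<Rightarrow> 'a set set \<Rightarrow> bool" where
  "forest V E \<longleftrightarrow> (\<forall>C \<in> components V E. card (induced_edges E C) + 1 = card C)"

definition constellation :: "'a set \<Rightarrow> 'a set set \<Rightarrow> bool" where
  "constellation V E \<longleftrightarrow> forest V E \<and>
     (\<forall>C \<in> components V E. is_star C (induced_edges E C))"

end

theory Submission
  imports Defs
begin

text \<open>An idempotent map r of V to itself, with fixed point set D, determines the star
  forest joining every vertex v outside D to r v. Its components are the fibres of r, so it is
  a constellation with |V| - |D| edges, and D dominates it. Conversely every constellation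
  arises this way by sending each vertex to the centre of its star. Keeping |V| - k edges of G
  that form a constellation is therefore the same as choosing a dominating set of size k
  together with a dominating neighbour for every other vertex.\<close>

lemma adj_rel_rtrancl_sym: "(x, y) \<in> (adj_rel E)\<^sup>* \<Longrightarrow> (y, x) \<in> (adj_rel E)\<^sup>*"
proof -
  have "sym (adj_rel E)" unfolding sym_def adj_rel_def by (auto simp: insert_commute)
  thus "(x, y) \<in> (adj_rel E)\<^sup>* \<Longrightarrow> (y, x) \<in> (adj_rel E)\<^sup>*"
    using sym_rtrancl by (auto dest: symD)
qed

lemma component_subset: "component V E v \<subseteq> V"
  by (auto simp: component_def)

lemma self_in_component: "v \<in> V \<Longrightarrow> v \<in> component V E v"
  by (simp add: component_def)

lemma edge_in_component: "{u, w} \<in> E \<Longrightarrow> w \<in> V \<Longrightarrow> w \<in> component V E u"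
  unfolding component_def adj_rel_def by auto

lemma component_eq:
  assumes "u \<in> component V E v"
  shows "component V E u = component V E v"
proof -
  have vu: "(v, u) \<in> (adj_rel E)\<^sup>*" using assms by (simp add: component_def)
  with adj_rel_rtrancl_sym[OF vu] show ?thesis unfolding component_def by (blast intro: rtrancl_trans)
qed

lemma card_star:
  assumes "finite C" and "is_star C F"
  shows "card F + 1 = card C"
proof -
  from assms(2) obtain c where c: "c \<in> C" and F: "F = {{c, v} | v. v \<in> C \<and> v \<noteq> c}"
    unfolding is_star_def by blast
  have "F = (\<lambda>v. {c, v}) ` (C - {c})" using F by auto
  moreover have "inj_on (\<lambda>v. {c, v}) (C - {c})" by (auto simp: inj_on_def doubleton_eq_iff)
  ultimately have "card F = card C - 1" using c assms(1) by (simp add: card_image)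
  moreover have "card C > 0" using c assms(1) card_gt_0_iff by blast
  ultimately show ?thesis by simp
qed

lemma constellation_iff_stars:
  assumes "finite V"
  shows "constellation V E \<longleftrightarrow> (\<forall>C \<in> components V E. is_star C (induced_edges E C))"
proof -
  have "card (induced_edges E C) + 1 = card C"
    if "C \<in> components V E" and "is_star C (induced_edges E C)" for C
  proof (rule card_star)
    have "C \<subseteq> V" using that(1) by (auto simp: components_def component_def)
    thus "finite C" using assms by (rule finite_subset)
  qed (rule that(2))
  thus ?thesis unfolding constellation_def forest_def by blast
qed

definition retraction_on :: "'a set \<Rightarrow> ('a \<Rightarrow> 'a) \<Rightarrow> bool" where
  "retraction_on V r \<longleftrightarrow> r ` V \<subseteq> V \<and> (\<forall>x \<in> V. r (r x) = r x)"

definition retraction_edges :: "('a \<Rightarrow> 'a) \<Rightarrow> 'a set \<Rightarrow> 'a set set" where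
  "retraction_edges r V = (\<lambda>v. {r v, v}) ` {v \<in> V. r v \<noteq> v}"

context
  fixes V :: "'a set" and r :: "'a \<Rightarrow> 'a"
  assumes retraction: "retraction_on V r"
begin

lemma retraction_on_into: "r ` V \<subseteq> V"
  using retraction by (simp add: retraction_on_def)

lemma retraction_on_idem: "x \<in> V \<Longrightarrow> r (r x) = r x"
  using retraction by (simp add: retraction_on_def)

lemma card_retraction_edges:
  assumes "finite V"
  shows "card (retraction_edges r V) + card {v \<in> V. r v = v} = card V"
proof -
  have "inj_on (\<lambda>v. {r v, v}) {v \<in> V. r v \<noteq> v}"
  proof (rule inj_onI)
    fix a b assume a: "a \<in> {v \<in> V. r v \<noteq> v}" and b: "b \<in> {v \<in> V. r v \<noteq> v}"
      and ab: "{r a, a} = {r b, b}"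
    show "a = b"
    proof (rule ccontr)
      assume "a \<noteq> b"
      hence "a = r b" using ab by (auto simp: doubleton_eq_iff)
      thus False using a b retraction_on_idem by auto
    qed
  qed
  hence "card (retraction_edges r V) = card {v \<in> V. r v \<noteq> v}"
    by (simp add: retraction_edges_def card_image)
  moreover have "card {v \<in> V. r v \<noteq> v} + card {v \<in> V. r v = v} = card V"
    using assms by (subst card_Un_disjoint[symmetric]) (auto intro: arg_cong[where f = card])
  ultimately show ?thesis by simp
qed

lemma component_retraction_edges:
  assumes x: "x \<in> V"
  shows "component V (retraction_edges r V) x = {u \<in> V. r u = r x}"
proof (intro equalityI subsetI)
  let ?A = "adj_rel (retraction_edges r V)"
  fix u assume "u \<in> component V (retraction_edges r V) x"
  hence u: "u \<in> V" and "(x, u) \<in> ?A\<^sup>*" by (auto simp: component_def)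
  from this(2) have "r u = r x"
  proof (induction rule: rtrancl_induct)
    case (step y z)
    then obtain v where "v \<in> V" and "{y, z} = {r v, v}"
      by (auto simp: adj_rel_def retraction_edges_def)
    thus ?case using step.IH retraction_on_idem[OF \<open>v \<in> V\<close>] by (auto simp: doubleton_eq_iff)
  qed simp
  thus "u \<in> {u \<in> V. r u = r x}" using u by simp
next
  let ?A = "adj_rel (retraction_edges r V)"
  have to_image: "(v, r v) \<in> ?A\<^sup>*" if "v \<in> V" for v
  proof (cases "r v = v")
    case False
    hence "{v, r v} \<in> retraction_edges r V"
      using that by (auto simp: retraction_edges_def insert_commute)
    thus ?thesis by (simp add: adj_rel_def r_into_rtrancl)
  qed simp
  fix u assume "u \<in> {u \<in> V. r u = r x}"
  hence u: "u \<in> V" and ru: "r u = r x" by auto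
  have "(r u, u) \<in> ?A\<^sup>*" using adj_rel_rtrancl_sym[OF to_image[OF u]] .
  hence "(x, u) \<in> ?A\<^sup>*" using to_image[OF x] ru by (metis rtrancl_trans)
  thus "u \<in> component V (retraction_edges r V) x" using u by (simp add: component_def)
qed

lemma is_star_retraction_fibre:
  assumes x: "x \<in> V"
  defines "C \<equiv> {u \<in> V. r u = r x}"
  shows "is_star C (induced_edges (retraction_edges r V) C)"
  unfolding is_star_def
proof (intro bexI)
  show rx: "r x \<in> C" using x retraction_on_into retraction_on_idem by (auto simp: C_def)
  show "induced_edges (retraction_edges r V) C = {{r x, v} | v. v \<in> C \<and> v \<noteq> r x}"
  proof (intro equalityI subsetI)
    fix e assume "e \<in> induced_edges (retraction_edges r V) C"
    then obtain v where "v \<in> C" "r v \<noteq> v" "e = {r v, v}"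
      by (auto simp: induced_edges_def retraction_edges_def C_def)
    thus "e \<in> {{r x, v} | v. v \<in> C \<and> v \<noteq> r x}" by (auto simp: C_def)
  next
    fix e assume "e \<in> {{r x, v} | v. v \<in> C \<and> v \<noteq> r x}"
    then obtain v where "v \<in> C" "v \<noteq> r x" "e = {r v, v}" by (auto simp: C_def)
    thus "e \<in> induced_edges (retraction_edges r V) C"
      using rx by (auto simp: induced_edges_def retraction_edges_def C_def intro!: image_eqI[where x = v])
  qed
qed

lemma constellation_retraction_edges:
  assumes "finite V"
  shows "constellation V (retraction_edges r V)"
  using assms is_star_retraction_fibre component_retraction_edges
  by (auto simp: constellation_iff_stars components_def)

lemma dominating_set_fixed_points:
  assumes "retraction_edges r V \<subseteq> E"
  shows "dominating_set V E {v \<in> V. r v = v}"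
  unfolding dominating_set_def
proof (intro conjI ballI)
  fix v assume v: "v \<in> V - {v \<in> V. r v = v}"
  hence "{v, r v} \<in> E" using assms by (auto simp: retraction_edges_def insert_commute)
  moreover have "r v \<in> {v \<in> V. r v = v}" using v retraction_on_into retraction_on_idem by auto
  ultimately show "\<exists>d \<in> {v \<in> V. r v = v}. {v, d} \<in> E" by blast
qed auto

end

lemma retraction_of_dominating_set:
  assumes "dominating_set V E D"
  obtains r where "retraction_on V r" and "retraction_edges r V \<subseteq> E" and "{v \<in> V. r v = v} = D"
proof
  define r where "r v = (if v \<in> D then v else SOME d. d \<in> D \<and> {v, d} \<in> E)" for v
  have DV: "D \<subseteq> V" using assms by (simp add: dominating_set_def)
  have outside: "r v \<in> D \<and> {v, r v} \<in> E" if "v \<in> V - D" for v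
  proof -
    have "\<exists>d. d \<in> D \<and> {v, d} \<in> E" using assms that by (auto simp: dominating_set_def)
    hence "(SOME d. d \<in> D \<and> {v, d} \<in> E) \<in> D \<and> {v, SOME d. d \<in> D \<and> {v, d} \<in> E} \<in> E"
      by (rule someI_ex)
    thus ?thesis using that by (simp add: r_def)
  qed
  have fixed: "r d = d" if "d \<in> D" for d using that by (simp add: r_def)
  have into_D: "r v \<in> D" if "v \<in> V" for v using that outside fixed by (cases "v \<in> D") auto
  show "retraction_on V r" using into_D fixed DV by (auto simp: retraction_on_def)
  show "{v \<in> V. r v = v} = D" using into_D fixed DV by force
  show "retraction_edges r V \<subseteq> E"
    using outside by (auto simp: retraction_edges_def r_def insert_commute)
qed

lemma retraction_of_constellation:
  assumes "simple_graph V S" and "constellation V S"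
  obtains r where "retraction_on V r" and "S = retraction_edges r V"
proof
  let ?c = "component V S"
  define centre where
    "centre C = (SOME c. c \<in> C \<and> induced_edges S C = {{c, v} | v. v \<in> C \<and> v \<noteq> c})" for C
  define r where "r v = centre (?c v)" for v
  have "finite V" using assms(1) by (simp add: simple_graph_def)
  hence stars: "\<forall>C \<in> components V S. is_star C (induced_edges S C)"
    using assms(2) by (rule constellation_iff_stars[THEN iffD1])
  have star: "r v \<in> ?c v \<and> induced_edges S (?c v) = {{r v, w} | w. w \<in> ?c v \<and> w \<noteq> r v}"
    if "v \<in> V" for v
  proof -
    have "?c v \<in> components V S" using that by (simp add: components_def)
    hence "is_star (?c v) (induced_edges S (?c v))" using stars by blast
    hence "\<exists>c. c \<in> ?c v \<and> induced_edges S (?c v) = {{c, w} | w. w \<in> ?c v \<and> w \<noteq> c}"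
      unfolding is_star_def by blast
    thus ?thesis unfolding r_def centre_def by (rule someI_ex)
  qed
  have centre_in: "r v \<in> ?c v" if "v \<in> V" for v
    using star[OF that] by (rule conjunct1)
  have star_edges: "induced_edges S (?c v) = {{r v, w} | w. w \<in> ?c v \<and> w \<noteq> r v}"
    if "v \<in> V" for v
    using star[OF that] by (rule conjunct2)
  have "r x \<in> V" if "x \<in> V" for x
    using subsetD[OF component_subset centre_in[OF that]] .
  moreover have "r (r x) = r x" if "x \<in> V" for x
    using component_eq[OF centre_in[OF that]] by (simp add: r_def)
  ultimately show "retraction_on V r" by (simp add: retraction_on_def image_subset_iff)
  show "S = retraction_edges r V"
  proof (intro equalityI subsetI)
    fix e assume eS: "e \<in> S"
    then obtain u w where u: "u \<in> V" and w: "w \<in> V" and e: "e = {u, w}"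
      using assms(1) by (auto simp: simple_graph_def)
    have "u \<in> ?c u" using u by (rule self_in_component)
    moreover have "w \<in> ?c u" using eS e w by (intro edge_in_component) auto
    ultimately have "e \<in> induced_edges S (?c u)" using eS e by (simp add: induced_edges_def)
    then obtain x where x: "x \<in> ?c u" and ne: "x \<noteq> r u" and ex: "e = {r u, x}"
      unfolding star_edges[OF u] mem_Collect_eq by (elim exE conjE)
    have "r x = r u" using component_eq[OF x] by (simp add: r_def)
    moreover have "x \<in> V" using subsetD[OF component_subset x] .
    ultimately have "e = {r x, x}" and "x \<in> {v \<in> V. r v \<noteq> v}" using ne ex by auto
    thus "e \<in> retraction_edges r V" unfolding retraction_edges_def by (rule image_eqI)
  next
    fix e assume "e \<in> retraction_edges r V"
    then obtain v where v: "v \<in> V" "r v \<noteq> v" and e: "e = {r v, v}"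
      by (auto simp: retraction_edges_def)
    have "v \<in> ?c v" using v(1) by (rule self_in_component)
    hence "e \<in> {{r v, w} | w. w \<in> ?c v \<and> w \<noteq> r v}"
      using v(2) unfolding e mem_Collect_eq by (intro exI[of _ v] conjI) auto
    hence "e \<in> induced_edges S (?c v)" by (simp only: star_edges[OF v(1)])
    thus "e \<in> S" by (simp add: induced_edges_def)
  qed
qed

lemma dominating_set_iff_retraction:
  "(\<exists>D. dominating_set V E D \<and> card D = k) \<longleftrightarrow>
   (\<exists>r. retraction_on V r \<and> retraction_edges r V \<subseteq> E \<and> card {v \<in> V. r v = v} = k)"
proof
  assume "\<exists>D. dominating_set V E D \<and> card D = k"
  then obtain D where "dominating_set V E D" and "card D = k" by blast
  then obtain r where "retraction_on V r" "retraction_edges r V \<subseteq> E" "{v \<in> V. r v = v} = D"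
    by (elim retraction_of_dominating_set)
  thus "\<exists>r. retraction_on V r \<and> retraction_edges r V \<subseteq> E \<and> card {v \<in> V. r v = v} = k"
    using \<open>card D = k\<close> by blast
next
  assume "\<exists>r. retraction_on V r \<and> retraction_edges r V \<subseteq> E \<and> card {v \<in> V. r v = v} = k"
  thus "\<exists>D. dominating_set V E D \<and> card D = k" using dominating_set_fixed_points by blast
qed

lemma constellation_subgraph_iff_retraction:
  assumes "simple_graph V E"
  shows "(\<exists>S \<subseteq> E. constellation V S \<and> card S + k = card V) \<longleftrightarrow>
         (\<exists>r. retraction_on V r \<and> retraction_edges r V \<subseteq> E \<and> card {v \<in> V. r v = v} = k)"
proof -
  have finV: "finite V" using assms by (simp add: simple_graph_def)
  show ?thesis
  proof
    assume "\<exists>S \<subseteq> E. constellation V S \<and> card S + k = card V"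
    then obtain S where "S \<subseteq> E" and "constellation V S" and card_S: "card S + k = card V" by blast
    moreover have "simple_graph V S" using assms \<open>S \<subseteq> E\<close> by (auto simp: simple_graph_def)
    ultimately obtain r where r: "retraction_on V r" and S: "S = retraction_edges r V"
      by (elim retraction_of_constellation)
    have "card {v \<in> V. r v = v} = k" using card_retraction_edges[OF r finV] S card_S by simp
    thus "\<exists>r. retraction_on V r \<and> retraction_edges r V \<subseteq> E \<and> card {v \<in> V. r v = v} = k"
      using r S \<open>S \<subseteq> E\<close> by blast
  next
    assume "\<exists>r. retraction_on V r \<and> retraction_edges r V \<subseteq> E \<and> card {v \<in> V. r v = v} = k"
    then obtain r where r: "retraction_on V r" and "retraction_edges r V \<subseteq> E"
      and "card {v \<in> V. r v = v} = k" by blast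
    moreover have "card (retraction_edges r V) + k = card V"
      using card_retraction_edges[OF r finV] \<open>card {v \<in> V. r v = v} = k\<close> by simp
    ultimately show "\<exists>S \<subseteq> E. constellation V S \<and> card S + k = card V"
      using constellation_retraction_edges[OF r finV] by blast
  qed
qed

theorem mainTheorem5:
  fixes V :: "'a set" and E :: "'a set set" and k :: nat
  assumes "simple_graph V E"
  shows "(\<exists>D. dominating_set V E D \<and> card D = k) \<longleftrightarrow>
         (\<exists>F \<subseteq> E. int (card F) = int (card E) - int (card V) + int k
                  \<and> constellation V (E - F))"
proof -
  have "E \<subseteq> Pow V" and "finite V" using assms by (auto simp: simple_graph_def)
  hence finE: "finite E" by (simp add: finite_subset)
  have card_split: "card (E - F) + card F = card E" if "F \<subseteq> E" for F
    using card_Diff_subset[OF finite_subset[OF that finE] that] card_mono[OF finE that] by simp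
  have "(\<exists>F \<subseteq> E. int (card F) = int (card E) - int (card V) + int k \<and> constellation V (E - F))
        \<longleftrightarrow> (\<exists>S \<subseteq> E. constellation V S \<and> card S + k = card V)"
  proof
    assume "\<exists>F \<subseteq> E. int (card F) = int (card E) - int (card V) + int k \<and> constellation V (E - F)"
    then obtain F where "F \<subseteq> E" "int (card F) = int (card E) - int (card V) + int k"
      "constellation V (E - F)" by blast
    thus "\<exists>S \<subseteq> E. constellation V S \<and> card S + k = card V"
      using card_split[of F] by (intro exI[of _ "E - F"]) auto
  next
    assume "\<exists>S \<subseteq> E. constellation V S \<and> card S + k = card V"
    then obtain S where "S \<subseteq> E" "constellation V S" "card S + k = card V" by blast
    moreover have "E - (E - S) = S" using \<open>S \<subseteq> E\<close> by blast
    ultimately show "\<exists>F \<subseteq> E. int (card F) = int (card E) - int (card V) + int k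
                       \<and> constellation V (E - F)"
      using card_split[of "E - S"] by (intro exI[of _ "E - S"]) auto
  qed
  thus ?thesis
    using dominating_set_iff_retraction constellation_subgraph_iff_retraction[OF assms] by simp
qed

end
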